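(* Let $x \geq 1$ and $m \geq 2$ be integers. Let $\mathcal{C}_{m,x}$ be the set of binary words of length $m$ containing no pattern from $\mathcal{T}_x = \{0\mathbf{1}^y0,\ 1\mathbf{0}^y1 : 1\le y\le x\}$ as a contiguous substring, listed in increasing lexicographic order, with $g(\mathbf{c})$ the position (from $0$) of $\mathbf{c}$ in this list. Let $N(k,x) = |\mathcal{C}_{k,x}|$ for $k\ge1$ and $N(k,x)\triangleq 2$ for all integers $k\le 1$. Define the balanced index $g^{\mathrm{b}}(\mathbf{c})$ of $\mathbf{c}\in\mathcal{C}_{m,x}$ by $g^{\mathrm{b}}(\mathbf{c}) = g(\mathbf{c})$ if the leftmost bit of $\mathbf{c}$ is $0$, and $g^{\mathrm{b}}(\mathbf{c}) = N(m,x)-1-g(\mathbf{c})$ if the leftmost bit of $\mathbf{c}$ is $1$ (so that the codewords with indices $g$ and $N(m,x)-1-g$ share the same balanced index). Then for $\mathbf{c} = [c_{m-1}\,c_{m-2}\dots c_0] \in \mathcal{C}_{m,x}$ (with $c_{m-1}$ the leftmost bit): if $c_{m-1}=0$, $$g^{\mathrm{b}}(\mathbf{c}) = \frac12 \sum_{\substack{0\le i\le m-2\\ c_i=1}} N(i-x+1,x);$$ if $c_{m-1}=1$, $$g^{\mathrm{b}}(\mathbf{c}) = \frac12 \sum_{\substack{0\le i\le m-2\\ c_i=0}} N(i-x+1,x).$$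
   Context: $\mathbf{0}^r$ (resp. $\mathbf{1}^r$) denotes a run of $r$ consecutive $0$'s (resp. $1$'s). Lexicographic order on binary words of a fixed length is the order as binary numbers with the leftmost bit most significant. In the paper, a balanced LOCO code encodes each message by the pair of codewords with indices $g$ and $N(m,x)-1-g$ in $\mathcal{C}_{m,x}$, and $g^{\mathrm{b}}$ is the common index of this pair (equal to the index of the member beginning with $0$). *)

theory Defs
  imports Complex_Main
begin

(* Binary words are bool lists, True = bit 1, head = leftmost (most significant) bit. *)

definition is_substring :: "bool list \<Rightarrow> bool list \<Rightarrow> bool" where
  "is_substring p w \<longleftrightarrow> (\<exists>a b. w = a @ p @ b)"

definition forbidden :: "nat \<Rightarrow> bool list set" where
  "forbidden x = {False # replicate y True @ [False] | y. 1 \<le> y \<and> y \<le> x}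
              \<union> {True # replicate y False @ [True] | y. 1 \<le> y \<and> y \<le> x}"

definition LOCO :: "nat \<Rightarrow> nat \<Rightarrow> bool list set" where
  "LOCO m x = {w. length w = m \<and> (\<forall>p\<in>forbidden x. \<not> is_substring p w)}"

definition bin_val :: "bool list \<Rightarrow> nat" where
  "bin_val w = foldl (\<lambda>acc b. 2 * acc + (if b then 1 else 0)) 0 w"

definition g_idx :: "nat \<Rightarrow> nat \<Rightarrow> bool list \<Rightarrow> nat" where
  "g_idx m x c = card {w \<in> LOCO m x. bin_val w < bin_val c}"

definition N_card :: "int \<Rightarrow> nat \<Rightarrow> nat" where
  "N_card k x = (if k \<le> 1 then 2 else card (LOCO (nat k) x))"

definition gb_idx :: "nat \<Rightarrow> nat \<Rightarrow> bool list \<Rightarrow> nat" where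
  "gb_idx m x c = (if hd c = False then g_idx m x c
                   else N_card (int m) x - 1 - g_idx m x c)"

(* bit c_i of c = [c_{m-1} ... c_0] *)
definition bit_at :: "bool list \<Rightarrow> nat \<Rightarrow> bool" where
  "bit_at c i = c ! (length c - 1 - i)"

end

theory Submission
  imports Defs
begin

(* Write a codeword with leading bit 0 as 0c.  By induction on the length, 2 g(0c) equals the
   weight of c, the sum of N(i-x+1,x) over the 1-bits c_i.  The codewords below 0c are the words
   0v with v < c in C_{m-1,x} such that 0v does not start with a pattern 01^y0.  If c starts with 0
   no such v lies below c, and the claim is the induction hypothesis for c.  If c starts with 1,
   then c starts with at least x+1 ones, so every v starting with some 1^y0 (y <= x) lies below c.
   The complement map w -> ~w preserves C_{m,x} and reverses the order, so g(~c) = N - 1 - g(c);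
   together with the induction hypothesis at 01^{m-2} and at 0^{x+1}1^{m-x-2} this expresses every
   count in terms of weights of all-ones words, and the claim reduces to weight bookkeeping.
   The case of leading bit 1 follows from the complement symmetry. *)

section \<open>Words avoiding the forbidden patterns\<close>

definition loco_word :: "nat \<Rightarrow> bool list \<Rightarrow> bool" where
  "loco_word x w \<longleftrightarrow> (\<forall>p\<in>forbidden x. \<not> is_substring p w)"

(* a # w begins with a pattern of forbidden x *)
definition forbidden_prefix :: "nat \<Rightarrow> bool \<Rightarrow> bool list \<Rightarrow> bool" where
  "forbidden_prefix x a w \<longleftrightarrow>
     (\<exists>y. 1 \<le> y \<and> y \<le> x \<and> y < length w \<and> (\<forall>j<y. w ! j = (\<not> a)) \<and> w ! y = a)"

lemma LOCO_eq: "LOCO m x = {w. length w = m \<and> loco_word x w}"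
  by (simp add: LOCO_def loco_word_def)

lemma is_substring_Cons:
  "is_substring p (a # w) \<longleftrightarrow> (\<exists>b. a # w = p @ b) \<or> is_substring p w"
proof
  assume "is_substring p (a # w)"
  then obtain u b where "a # w = u @ p @ b" unfolding is_substring_def by blast
  then show "(\<exists>b. a # w = p @ b) \<or> is_substring p w"
    by (cases u) (auto simp: is_substring_def)
next
  assume "(\<exists>b. a # w = p @ b) \<or> is_substring p w"
  then show "is_substring p (a # w)"
    unfolding is_substring_def by (metis append_Cons append_Nil)
qed

lemma ex_append_eq_iff_nth:
  "(\<exists>b. w = p @ b) \<longleftrightarrow> length p \<le> length w \<and> (\<forall>j<length p. w ! j = p ! j)"
proof
  assume "length p \<le> length w \<and> (\<forall>j<length p. w ! j = p ! j)"
  then have "take (length p) w = p" by (intro nth_equalityI) auto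
  then show "\<exists>b. w = p @ b" by (metis append_take_drop_id)
qed (auto simp: nth_append)

lemma forbidden_iff:
  "p \<in> forbidden x \<longleftrightarrow> (\<exists>b y. 1 \<le> y \<and> y \<le> x \<and> p = b # replicate y (\<not> b) @ [b])"
  unfolding forbidden_def by (auto; metis (full_types))

lemma forbidden_prefix_iff:
  "(\<exists>p\<in>forbidden x. \<exists>b. a # w = p @ b) \<longleftrightarrow> forbidden_prefix x a w"
proof
  assume "\<exists>p\<in>forbidden x. \<exists>b. a # w = p @ b"
  then obtain b y v where y: "1 \<le> y" "y \<le> x"
    and "a # w = (b # replicate y (\<not> b) @ [b]) @ v"
    by (auto simp: forbidden_iff)
  then have "w = (replicate y (\<not> a) @ [a]) @ v" by simp
  then have "length (replicate y (\<not> a) @ [a]) \<le> length w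
      \<and> (\<forall>j<length (replicate y (\<not> a) @ [a]). w ! j = (replicate y (\<not> a) @ [a]) ! j)"
    using ex_append_eq_iff_nth by blast
  then show "forbidden_prefix x a w"
    unfolding forbidden_prefix_def using y by (intro exI[of _ y]) (auto simp: nth_append)
next
  assume "forbidden_prefix x a w"
  then obtain y where y: "1 \<le> y" "y \<le> x" "y < length w" "\<forall>j<y. w ! j = (\<not> a)" "w ! y = a"
    unfolding forbidden_prefix_def by blast
  then have "length (replicate y (\<not> a) @ [a]) \<le> length w
      \<and> (\<forall>j<length (replicate y (\<not> a) @ [a]). w ! j = (replicate y (\<not> a) @ [a]) ! j)"
    by (auto simp: nth_append less_Suc_eq)
  then obtain v where "w = (replicate y (\<not> a) @ [a]) @ v"
    using ex_append_eq_iff_nth by blast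
  then have "a # w = (a # replicate y (\<not> a) @ [a]) @ v" by simp
  moreover have "a # replicate y (\<not> a) @ [a] \<in> forbidden x"
    using y forbidden_iff by blast
  ultimately show "\<exists>p\<in>forbidden x. \<exists>b. a # w = p @ b" by blast
qed

lemma loco_word_Nil: "loco_word x []"
  by (auto simp: loco_word_def is_substring_def forbidden_iff)

lemma loco_word_Cons:
  "loco_word x (a # w) \<longleftrightarrow> loco_word x w \<and> \<not> forbidden_prefix x a w"
  unfolding loco_word_def using is_substring_Cons forbidden_prefix_iff by blast

lemma forbidden_prefix_map_Not:
  "forbidden_prefix x a (map Not w) = forbidden_prefix x (\<not> a) w"
  unfolding forbidden_prefix_def by auto

lemma loco_word_map_Not: "loco_word x (map Not w) = loco_word x w"
  by (induction w) (auto simp: loco_word_Cons loco_word_Nil forbidden_prefix_map_Not)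

lemma forbidden_prefix_hd:
  assumes "forbidden_prefix x a w"
  shows "w \<noteq> [] \<and> hd w = (\<not> a)"
proof -
  obtain y where "1 \<le> y" "y < length w" "\<forall>j<y. w ! j = (\<not> a)"
    using assms unfolding forbidden_prefix_def by blast
  then have "w \<noteq> []" and "w ! 0 = (\<not> a)" by auto
  then show ?thesis by (simp add: hd_conv_nth)
qed

lemma not_forbidden_prefix_run:
  assumes "\<not> forbidden_prefix x a w" "w \<noteq> []" "hd w = (\<not> a)"
  shows "j < min (x + 1) (length w) \<Longrightarrow> w ! j = (\<not> a)"
proof (induction j rule: less_induct)
  case (less j)
  show ?case
  proof (cases j)
    case 0
    then show ?thesis using assms(2,3) by (cases w) auto
  next
    case (Suc i)
    show ?thesis
    proof (rule ccontr)
      assume "w ! j \<noteq> (\<not> a)"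
      then have "forbidden_prefix x a w"
        unfolding forbidden_prefix_def using less Suc by (intro exI[of _ j]) auto
      then show False using assms(1) by blast
    qed
  qed
qed

lemma loco_word_replicate_False_True:
  "loco_word x (replicate k False @ replicate j True)"
proof (induction k)
  case 0
  have "\<not> forbidden_prefix x True (replicate i True)" for i
    unfolding forbidden_prefix_def by force
  then show ?case by (induction j) (auto simp: loco_word_Cons loco_word_Nil)
next
  case (Suc k)
  have "\<not> forbidden_prefix x False (replicate k False @ replicate j True)"
  proof
    assume fp: "forbidden_prefix x False (replicate k False @ replicate j True)"
    then have "k = 0" using forbidden_prefix_hd by (cases k) fastforce+
    moreover obtain y where "y < k + j" "\<not> (replicate k False @ replicate j True) ! y"
      using fp unfolding forbidden_prefix_def by auto
    ultimately show False by simp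
  qed
  then show ?case using Suc by (simp add: loco_word_Cons)
qed

lemma foldl_bin_val:
  "foldl (\<lambda>acc b. 2 * acc + (if b then 1 else 0)) (acc::nat) w
     = acc * 2 ^ length w + foldl (\<lambda>acc b. 2 * acc + (if b then 1 else 0)) 0 w"
proof (induction w arbitrary: acc)
  case (Cons a w)
  show ?case using Cons[of "2 * acc + (if a then 1 else 0)"] Cons[of "if a then 1 else 0"]
    by (simp add: algebra_simps)
qed simp

lemma bin_val_Nil [simp]: "bin_val [] = 0"
  by (simp add: bin_val_def)

lemma bin_val_Cons: "bin_val (a # w) = (if a then 2 ^ length w else 0) + bin_val w"
  unfolding bin_val_def by (subst foldl_Cons, subst foldl_bin_val) simp

lemma bin_val_less_pow: "bin_val w < 2 ^ length w"
  by (induction w) (auto simp: bin_val_Cons)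

lemma bin_val_inj: "length u = length w \<Longrightarrow> bin_val u = bin_val w \<Longrightarrow> u = w"
proof (induction u arbitrary: w)
  case (Cons a u)
  then obtain b v where w: "w = b # v" by (cases w) auto
  have l: "length u = length v" using Cons w by simp
  have "a = b" using Cons.prems bin_val_less_pow[of u] bin_val_less_pow[of v] l unfolding w
    by (auto simp: bin_val_Cons split: if_splits)
  then show ?case using Cons l w by (auto simp: bin_val_Cons)
qed simp

lemma bin_val_map_Not: "bin_val (map Not w) + bin_val w + 1 = 2 ^ length w"
  by (induction w) (auto simp: bin_val_Cons)

lemma pow_le_bin_val_nth: "y < length w \<Longrightarrow> w ! y \<Longrightarrow> 2 ^ (length w - 1 - y) \<le> bin_val w"
proof (induction w arbitrary: y)
  case (Cons a w)
  show ?case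
  proof (cases y)
    case 0
    then show ?thesis using Cons by (simp add: bin_val_Cons)
  next
    case (Suc z)
    then show ?thesis using Cons.IH[of z] Cons.prems by (simp add: bin_val_Cons)
  qed
qed simp

lemma bin_val_less_pow_iff_hd: "w \<noteq> [] \<Longrightarrow> bin_val w < 2 ^ (length w - 1) \<longleftrightarrow> \<not> hd w"
  by (cases w) (auto simp: bin_val_Cons bin_val_less_pow)

lemma bin_val_less_first_difference:
  "length u = length v \<Longrightarrow> (\<forall>j<y. u ! j = v ! j) \<Longrightarrow> y < length u \<Longrightarrow> \<not> u ! y \<Longrightarrow> v ! y
   \<Longrightarrow> bin_val u < bin_val v"
proof (induction u arbitrary: v y)
  case (Cons a u)
  then obtain b w where v: "v = b # w" by (cases v) auto
  show ?case
  proof (cases y)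
    case 0
    then show ?thesis using Cons v bin_val_less_pow[of u] by (simp add: bin_val_Cons)
  next
    case (Suc z)
    have "a = b" using Cons.prems(2) Suc v by auto
    moreover have "\<forall>j<z. u ! j = w ! j"
    proof (intro allI impI)
      fix j assume "j < z"
      then show "u ! j = w ! j" using Cons.prems(2) Suc v by (metis Suc_mono nth_Cons_Suc)
    qed
    then have "bin_val u < bin_val w" using Cons.IH[of w z] Cons.prems Suc v by auto
    ultimately show ?thesis using v Cons.prems(1) by (simp add: bin_val_Cons)
  qed
qed simp

lemma bin_val_replicate_False_append: "bin_val (replicate k False @ w) = bin_val w"
  by (induction k) (auto simp: bin_val_Cons)

lemma bin_val_replicate_True: "bin_val (replicate k True) + 1 = 2 ^ k"
  by (induction k) (auto simp: bin_val_Cons)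

section \<open>Complement symmetry\<close>

lemma finite_LOCO: "finite (LOCO n x)"
proof (rule finite_subset)
  show "LOCO n x \<subseteq> {w. set w \<subseteq> UNIV \<and> length w = n}" by (auto simp: LOCO_def)
  show "finite {w::bool list. set w \<subseteq> UNIV \<and> length w = n}"
    by (rule finite_lists_length_eq) simp
qed

lemma map_Not_Not [simp]: "map Not (map Not w) = w"
  by (induction w) auto

lemma LOCO_map_Not [simp]: "map Not w \<in> LOCO n x \<longleftrightarrow> w \<in> LOCO n x"
  by (simp add: LOCO_eq loco_word_map_Not)

lemma card_LOCO_map_Not:
  "card {w \<in> LOCO n x. P (map Not w)} = card {w \<in> LOCO n x. P w}"
proof -
  have "{w \<in> LOCO n x. P w} = map Not ` {w \<in> LOCO n x. P (map Not w)}"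
    by (auto simp: image_iff) (metis map_Not_Not LOCO_map_Not)
  moreover have "inj_on (map Not) S" for S :: "bool list set"
    by (rule inj_onI) (metis map_Not_Not)
  ultimately show ?thesis by (simp add: card_image)
qed

lemma hd_map_Not: "w \<noteq> [] \<Longrightarrow> hd (map Not w) = (\<not> hd w)"
  by (cases w) auto

lemma card_LOCO_eq_double_hd_False:
  assumes "1 \<le> n"
  shows "card (LOCO n x) = 2 * card {w \<in> LOCO n x. \<not> hd w}"
proof -
  have ne: "w \<in> LOCO n x \<Longrightarrow> w \<noteq> []" for w using assms by (auto simp: LOCO_def)
  have "{w \<in> LOCO n x. hd w} = {w \<in> LOCO n x. \<not> hd (map Not w)}"
    using ne hd_map_Not by auto
  then have "card {w \<in> LOCO n x. hd w} = card {w \<in> LOCO n x. \<not> hd w}"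
    using card_LOCO_map_Not[of n x "\<lambda>w. \<not> hd w"] by simp
  moreover have "card ({w \<in> LOCO n x. \<not> hd w} \<union> {w \<in> LOCO n x. hd w})
      = card {w \<in> LOCO n x. \<not> hd w} + card {w \<in> LOCO n x. hd w}"
    using finite_LOCO[of n x] by (intro card_Un_disjoint) auto
  moreover have "{w \<in> LOCO n x. \<not> hd w} \<union> {w \<in> LOCO n x. hd w} = LOCO n x" by auto
  ultimately show ?thesis by simp
qed

lemma LOCO_bin_val_eq:
  "c \<in> LOCO n x \<Longrightarrow> w \<in> LOCO n x \<Longrightarrow> bin_val w = bin_val c \<Longrightarrow> w = c"
  using bin_val_inj by (simp add: LOCO_def)

lemma card_LOCO_split:
  assumes c: "c \<in> LOCO n x"
  shows "card (LOCO n x) = g_idx n x c + card {w \<in> LOCO n x. bin_val c < bin_val w} + 1"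
proof -
  let ?S1 = "{w \<in> LOCO n x. bin_val w < bin_val c}"
    and ?S2 = "{w \<in> LOCO n x. bin_val c < bin_val w}"
  have "w \<in> LOCO n x - {c} \<longleftrightarrow> w \<in> ?S1 \<union> ?S2" for w
    using LOCO_bin_val_eq[OF c, of w] by (cases "bin_val w" "bin_val c" rule: linorder_cases) auto
  then have "LOCO n x - {c} = ?S1 \<union> ?S2" by blast
  moreover have "card (?S1 \<union> ?S2) = card ?S1 + card ?S2"
    using finite_LOCO by (intro card_Un_disjoint) auto
  moreover have "card (LOCO n x - {c}) + 1 = card (LOCO n x)"
    using card_Suc_Diff1[OF finite_LOCO c] by simp
  ultimately show ?thesis by (simp add: g_idx_def)
qed

lemma g_idx_map_Not:
  assumes c: "c \<in> LOCO n x"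
  shows "g_idx n x (map Not c) + g_idx n x c + 1 = card (LOCO n x)"
proof -
  have "bin_val (map Not w) < bin_val (map Not c) \<longleftrightarrow> bin_val c < bin_val w"
    if "w \<in> LOCO n x" for w
  proof -
    have "length w = length c" using that c by (simp add: LOCO_def)
    then have "bin_val (map Not w) + bin_val w = bin_val (map Not c) + bin_val c"
      using bin_val_map_Not[of w] bin_val_map_Not[of c] by simp
    then show ?thesis by linarith
  qed
  then have "g_idx n x (map Not c) = card {w \<in> LOCO n x. bin_val c < bin_val w}"
    unfolding g_idx_def
    using card_LOCO_map_Not[of n x "\<lambda>w. bin_val w < bin_val (map Not c)"]
    by (metis (no_types, lifting) Collect_cong)
  then show ?thesis using card_LOCO_split[OF c] by simp
qed

section \<open>Counting codewords through the index law\<close>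

fun weight :: "nat \<Rightarrow> bool list \<Rightarrow> nat" where
  "weight x [] = 0"
| "weight x (a # w) = (if a then N_card (int (length w) - int x + 1) x else 0) + weight x w"

lemma weight_replicate_False_append: "weight x (replicate k False @ w) = weight x w"
  by (induction k) auto

lemma weight_map_Not: "weight x (map Not w) + weight x w = weight x (replicate (length w) True)"
  by (induction w) auto

(* the case c_{m-1} = 0 of the theorem, doubled to stay in nat *)
definition index_law :: "nat \<Rightarrow> nat \<Rightarrow> bool" where
  "index_law n x \<longleftrightarrow> (\<forall>c\<in>LOCO n x. \<not> hd c \<longrightarrow> 2 * g_idx n x c = weight x (tl c))"

lemma double_card_LOCO_below_pow:
  assumes law: "index_law n x" and k: "1 \<le> k" "k \<le> n"
  shows "2 * card {w \<in> LOCO n x. bin_val w < 2 ^ (n - k)} = weight x (replicate (n - k) True) + 2"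
proof -
  define e where "e = replicate k False @ replicate (n - k) True"
  have e: "e \<in> LOCO n x"
    using k by (simp add: e_def LOCO_eq loco_word_replicate_False_True)
  have "e = False # replicate (k - 1) False @ replicate (n - k) True"
    using k by (cases k) (simp_all add: e_def)
  then have "2 * g_idx n x e = weight x (replicate (n - k) True)"
    using law e unfolding index_law_def by (auto simp: weight_replicate_False_append)
  moreover have be: "bin_val e + 1 = 2 ^ (n - k)"
    using bin_val_replicate_True[of "n - k"] by (simp add: e_def bin_val_replicate_False_append)
  then have "bin_val w < 2 ^ (n - k) \<longleftrightarrow> bin_val w < bin_val e \<or> w = e"
    if "w \<in> LOCO n x" for w
    unfolding be[symmetric] using LOCO_bin_val_eq[OF e that] by (auto simp: less_Suc_eq)
  then have "{w \<in> LOCO n x. bin_val w < 2 ^ (n - k)}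
      = insert e {w \<in> LOCO n x. bin_val w < bin_val e}"
    using e by blast
  then have "card {w \<in> LOCO n x. bin_val w < 2 ^ (n - k)} = g_idx n x e + 1"
    using finite_LOCO[of n x] by (simp add: g_idx_def)
  ultimately show ?thesis by simp
qed

lemma card_LOCO_eq_weight:
  assumes "index_law n x" "1 \<le> n"
  shows "card (LOCO n x) = weight x (replicate (n - 1) True) + 2"
proof -
  have "bin_val w < 2 ^ (n - 1) \<longleftrightarrow> \<not> hd w" if "w \<in> LOCO n x" for w
  proof -
    have "length w = n" using that by (simp add: LOCO_def)
    then have "w \<noteq> []" using assms(2) by auto
    then show ?thesis using \<open>length w = n\<close> bin_val_less_pow_iff_hd[of w] by simp
  qed
  then have "{w \<in> LOCO n x. bin_val w < 2 ^ (n - 1)} = {w \<in> LOCO n x. \<not> hd w}" by blast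
  then show ?thesis
    using double_card_LOCO_below_pow[OF assms(1) order_refl assms(2)]
      card_LOCO_eq_double_hd_False[OF assms(2)] by simp
qed

lemma N_card_eq_weight:
  assumes "\<And>j. 2 \<le> j \<Longrightarrow> int j = k \<Longrightarrow> index_law j x"
  shows "N_card k x = weight x (replicate (nat (k - 1)) True) + 2"
proof (cases "k \<le> 1")
  case True
  then show ?thesis by (simp add: N_card_def)
next
  case False
  then have "index_law (nat k) x" using assms by simp
  moreover have "nat k - 1 = nat (k - 1)" by simp
  ultimately show ?thesis
    using False card_LOCO_eq_weight[of "nat k" x] by (simp add: N_card_def)
qed

lemma LOCO_below_pow_eq:
  assumes "1 \<le> n"
  shows "{w \<in> LOCO n x. bin_val w < 2 ^ (n - (x + 1))}
       = {w \<in> LOCO n x. \<not> hd w \<and> \<not> forbidden_prefix x True w}"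
proof (intro set_eqI iffI)
  fix w assume w: "w \<in> {w \<in> LOCO n x. bin_val w < 2 ^ (n - (x + 1))}"
  then have len: "length w = n" "w \<noteq> []" using assms by (auto simp: LOCO_def)
  have "bin_val w < 2 ^ (n - (x + 1))" using w by blast
  moreover have "(2::nat) ^ (n - (x + 1)) \<le> 2 ^ (n - 1)" by (intro power_increasing) auto
  ultimately have "bin_val w < 2 ^ (n - 1)" by linarith
  then have "\<not> hd w" using len bin_val_less_pow_iff_hd[of w] by simp
  moreover have "\<not> forbidden_prefix x True w"
  proof
    assume "forbidden_prefix x True w"
    then obtain y where y: "y \<le> x" "y < n" "w ! y" unfolding forbidden_prefix_def len by auto
    have "(2::nat) ^ (n - (x + 1)) \<le> 2 ^ (n - 1 - y)" using y by (intro power_increasing) auto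
    also have "\<dots> \<le> bin_val w" using pow_le_bin_val_nth[of y w] y len by simp
    finally show False using w by simp
  qed
  ultimately show "w \<in> {w \<in> LOCO n x. \<not> hd w \<and> \<not> forbidden_prefix x True w}" using w by blast
next
  fix w assume w: "w \<in> {w \<in> LOCO n x. \<not> hd w \<and> \<not> forbidden_prefix x True w}"
  define k where "k = min (x + 1) n"
  have len: "length w = n" "w \<noteq> []" using w assms by (auto simp: LOCO_def)
  have "take k w = replicate k False"
    using not_forbidden_prefix_run[of x True w] w len by (intro nth_equalityI) (auto simp: k_def)
  then have "w = replicate k False @ drop k w" by (metis append_take_drop_id)
  then have "bin_val w = bin_val (drop k w)" by (metis bin_val_replicate_False_append)
  also have "\<dots> < 2 ^ (n - k)" using bin_val_less_pow[of "drop k w"] len by simp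
  also have "n - k = n - (x + 1)" by (simp add: k_def)
  finally show "w \<in> {w \<in> LOCO n x. bin_val w < 2 ^ (n - (x + 1))}" using w by blast
qed

lemma double_card_forbidden_prefix_False:
  assumes law: "index_law n x" and n: "1 \<le> n"
  shows "2 * card {w \<in> LOCO n x. forbidden_prefix x False w}
           + weight x (replicate (n - (x + 1)) True) + 2 = card (LOCO n x)"
proof -
  let ?T = "{w \<in> LOCO n x. forbidden_prefix x True w}"
    and ?R = "{w \<in> LOCO n x. \<not> hd w \<and> \<not> forbidden_prefix x True w}"
  have k: "n - min (x + 1) n = n - (x + 1)" by simp
  have "card {w \<in> LOCO n x. forbidden_prefix x False w} = card ?T"
    using card_LOCO_map_Not[of n x "forbidden_prefix x True"]
    by (simp add: forbidden_prefix_map_Not)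
  moreover have "{w \<in> LOCO n x. \<not> hd w} = ?T \<union> ?R" using forbidden_prefix_hd[of x True] by blast
  then have "card {w \<in> LOCO n x. \<not> hd w} = card ?T + card ?R"
    using finite_LOCO[of n x] by (simp add: card_Un_disjoint disjoint_iff)
  moreover have "2 * card ?R = weight x (replicate (n - (x + 1)) True) + 2"
    using double_card_LOCO_below_pow[OF law _ _, of "min (x + 1) n"] LOCO_below_pow_eq[OF n, of x] n
    unfolding k by simp
  ultimately show ?thesis using card_LOCO_eq_double_hd_False[OF n, of x] by simp
qed

lemma g_idx_False_Cons:
  assumes "length c = m"
  shows "g_idx (Suc m) x (False # c)
           = card {w \<in> LOCO m x. \<not> forbidden_prefix x False w \<and> bin_val w < bin_val c}"
proof -
  let ?S = "{w \<in> LOCO m x. \<not> forbidden_prefix x False w \<and> bin_val w < bin_val c}"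
  have "{w \<in> LOCO (Suc m) x. bin_val w < bin_val (False # c)} = Cons False ` ?S"
  proof (intro set_eqI iffI)
    fix w assume w: "w \<in> {w \<in> LOCO (Suc m) x. bin_val w < bin_val (False # c)}"
    then obtain a v where av: "w = a # v" "length v = m" by (cases w) (auto simp: LOCO_def)
    have "\<not> a" using w av bin_val_less_pow[of c] assms by (auto simp: bin_val_Cons)
    then show "w \<in> Cons False ` ?S" using w av by (auto simp: LOCO_eq loco_word_Cons bin_val_Cons)
  next
    fix w assume "w \<in> Cons False ` ?S"
    then show "w \<in> {w \<in> LOCO (Suc m) x. bin_val w < bin_val (False # c)}"
      by (auto simp: LOCO_eq loco_word_Cons bin_val_Cons)
  qed
  moreover have "inj_on (Cons False) ?S" by simp
  ultimately show ?thesis by (simp add: g_idx_def card_image)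
qed

lemma LOCO_below_hd_False:
  assumes c: "c \<in> LOCO m x" "1 \<le> m" "\<not> hd c"
  shows "{w \<in> LOCO m x. \<not> forbidden_prefix x False w \<and> bin_val w < bin_val c}
           = {w \<in> LOCO m x. bin_val w < bin_val c}"
proof -
  have "\<not> forbidden_prefix x False w" if "w \<in> LOCO m x" "bin_val w < bin_val c" for w
  proof
    assume "forbidden_prefix x False w"
    then have "w \<noteq> []" "hd w" using forbidden_prefix_hd by auto
    moreover have "c \<noteq> []" "length c = m" "length w = m" using c that by (auto simp: LOCO_def)
    ultimately show False
      using c(3) that(2) bin_val_less_pow_iff_hd[of w] bin_val_less_pow_iff_hd[of c] by simp
  qed
  then show ?thesis by blast
qed

lemma card_below_hd_True:
  assumes c: "c \<in> LOCO m x" "1 \<le> m" "hd c" "\<not> forbidden_prefix x False c"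
  shows "card {w \<in> LOCO m x. \<not> forbidden_prefix x False w \<and> bin_val w < bin_val c}
           + card {w \<in> LOCO m x. forbidden_prefix x False w} = g_idx m x c"
proof -
  let ?B = "{w \<in> LOCO m x. forbidden_prefix x False w}"
    and ?S = "{w \<in> LOCO m x. bin_val w < bin_val c}"
  have lc: "length c = m" "c \<noteq> []" using c by (auto simp: LOCO_def)
  have "?B \<subseteq> ?S"
  proof
    fix w assume w: "w \<in> ?B"
    then obtain y where y: "y \<le> x" "y < length w" "\<forall>j<y. w ! j" "\<not> w ! y"
      unfolding forbidden_prefix_def by auto
    have lw: "length w = m" using w by (simp add: LOCO_def)
    have "c ! j" if "j \<le> y" for j
      using not_forbidden_prefix_run[OF c(4) lc(2)] c(3) that y lw lc by auto
    then have "bin_val w < bin_val c"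
      using bin_val_less_first_difference[of w c y] lw lc y by auto
    then show "w \<in> ?S" using w by blast
  qed
  moreover have "{w \<in> LOCO m x. \<not> forbidden_prefix x False w \<and> bin_val w < bin_val c} = ?S - ?B"
    by blast
  moreover have "finite ?S" using finite_LOCO by simp
  ultimately show ?thesis
    unfolding g_idx_def by (simp add: card_Diff_subset card_mono finite_subset)
qed

lemma double_card_below_eq_weight:
  assumes x: "1 \<le> x" and m: "1 \<le> m"
    and law: "\<And>j. 1 \<le> j \<Longrightarrow> j \<le> m \<Longrightarrow> index_law j x"
    and c: "c \<in> LOCO m x" "\<not> forbidden_prefix x False c"
  shows "2 * card {w \<in> LOCO m x. \<not> forbidden_prefix x False w \<and> bin_val w < bin_val c}
           = weight x c"
proof -
  have lc: "length c = m" "c \<noteq> []" using c m by (auto simp: LOCO_def)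
  show ?thesis
  proof (cases "hd c")
    case False
    then have "weight x c = weight x (tl c)" using lc by (cases c) auto
    then show ?thesis
      using LOCO_below_hd_False[OF c(1) m False] law[OF m order_refl] c False
      unfolding index_law_def g_idx_def by simp
  next
    case True
    have law_m: "index_law m x" using law m by simp
    have "2 * g_idx m x (map Not c) = weight x (map Not (tl c))"
      using law_m c(1) True lc hd_map_Not[of c] unfolding index_law_def
      by (simp add: map_tl)
    moreover have "weight x (map Not (tl c)) + weight x (tl c) = weight x (replicate (m - 1) True)"
      using weight_map_Not[of x "tl c"] lc by simp
    moreover have "N_card (int m - int x) x = weight x (replicate (m - (x + 1)) True) + 2"
    proof -
      have "nat (int m - int x - 1) = m - (x + 1)" by simp
      moreover have "index_law j x" if "2 \<le> j" "int j = int m - int x" for j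
        using law that x by simp
      ultimately show ?thesis using N_card_eq_weight[of "int m - int x" x] by simp
    qed
    moreover have "weight x c = N_card (int m - int x) x + weight x (tl c)"
    proof -
      obtain w where "c = True # w" "length w = m - 1" using lc True by (cases c) auto
      moreover have "int (m - 1) - int x + 1 = int m - int x" using m by simp
      ultimately show ?thesis by simp
    qed
    ultimately show ?thesis
      using card_below_hd_True[OF c(1) m True c(2)] g_idx_map_Not[OF c(1)]
        card_LOCO_eq_weight[OF law_m m] double_card_forbidden_prefix_False[OF law_m m]
      by linarith
  qed
qed

lemma index_law_holds:
  assumes x: "1 \<le> x"
  shows "1 \<le> n \<Longrightarrow> index_law n x"
proof (induction n rule: less_induct)
  case (less n)
  show ?case
  proof (cases "n = 1")
    case True
    show ?thesis unfolding index_law_def True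
    proof (intro ballI impI)
      fix c assume "c \<in> LOCO 1 x" "\<not> hd c"
      then have "c = [False]" by (cases c) (auto simp: LOCO_def)
      then show "2 * g_idx 1 x c = weight x (tl c)" by (simp add: g_idx_def bin_val_Cons)
    qed
  next
    case False
    then obtain m where n: "n = Suc m" and m: "1 \<le> m" using less.prems by (cases n) auto
    show ?thesis unfolding index_law_def
    proof (intro ballI impI)
      fix c assume "c \<in> LOCO n x" "\<not> hd c"
      then obtain c' where c: "c = False # c'" "c' \<in> LOCO m x" "\<not> forbidden_prefix x False c'"
        using n by (cases c) (auto simp: LOCO_eq loco_word_Cons)
      have "\<And>j. 1 \<le> j \<Longrightarrow> j \<le> m \<Longrightarrow> index_law j x" using less.IH n by simp
      then show "2 * g_idx n x c = weight x (tl c)"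
        using double_card_below_eq_weight[OF x m _ c(2,3)] g_idx_False_Cons[of c' m x] c n
        by (simp add: LOCO_def)
    qed
  qed
qed

section \<open>The balanced index\<close>

lemma bit_at_Cons:
  assumes "i < length w"
  shows "bit_at (a # w) i = bit_at w i"
proof -
  have "length w - i = Suc (length w - Suc i)" using assms by simp
  then show ?thesis by (simp add: bit_at_def)
qed

lemma weight_eq_sum:
  "weight x w = (\<Sum>i | i < length w \<and> bit_at w i. N_card (int i - int x + 1) x)"
proof (induction w)
  case (Cons a w)
  have "{i. i < length (a # w) \<and> bit_at (a # w) i}
      = (if a then insert (length w) else id) {i. i < length w \<and> bit_at w i}"
    by (auto simp: bit_at_Cons less_Suc_eq) (auto simp: bit_at_def)
  then show ?case using Cons by simp
qed simp

lemma sum_bit_at_eq_weight: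
  assumes "length c = m" "2 \<le> m"
  shows "(\<Sum>i\<in>{i. i \<le> m - 2 \<and> bit_at c i = b}. real (N_card (int i - int x + 1) x))
           = real (weight x (tl (if b then c else map Not c)))"
proof -
  define d where "d = (if b then c else map Not c)"
  have bit_d: "bit_at c i = b \<longleftrightarrow> bit_at d i" if "i < m" for i
    using that assms by (auto simp: d_def bit_at_def)
  have "length d = m" using assms(1) by (simp add: d_def)
  then obtain a w where d: "d = a # w" "length w = m - 1"
    using assms(2) by (cases d) auto
  have "i \<le> m - 2 \<and> bit_at c i = b \<longleftrightarrow> i < length (tl d) \<and> bit_at (tl d) i" for i
  proof (cases "i < m - 1")
    case True
    then show ?thesis using bit_d[of i] bit_at_Cons[of i w a] d by auto
  next
    case False
    then show ?thesis using d assms(2) by auto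
  qed
  then have "{i. i \<le> m - 2 \<and> bit_at c i = b} = {i. i < length (tl d) \<and> bit_at (tl d) i}"
    by blast
  then show ?thesis by (simp add: weight_eq_sum d_def)
qed

lemma double_gb_idx:
  assumes "1 \<le> x" "2 \<le> m" "c \<in> LOCO m x"
  shows "2 * gb_idx m x c = weight x (tl (if hd c then map Not c else c))"
proof -
  have law: "index_law m x" using index_law_holds assms by simp
  have "c \<noteq> []" using assms by (auto simp: LOCO_def)
  show ?thesis
  proof (cases "hd c")
    case False
    then show ?thesis using law assms(3) by (simp add: gb_idx_def index_law_def)
  next
    case True
    have "N_card (int m) x = card (LOCO m x)" using assms(2) by (simp add: N_card_def)
    then have "gb_idx m x c = g_idx m x (map Not c)"
      using True g_idx_map_Not[OF assms(3)] by (simp add: gb_idx_def)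
    then show ?thesis
      using law assms(3) True hd_map_Not[OF \<open>c \<noteq> []\<close>] by (simp add: index_law_def)
  qed
qed

theorem theorem3:
  fixes x m :: nat and c :: "bool list"
  assumes "x \<ge> 1" and "m \<ge> 2" and "c \<in> LOCO m x"
  shows "(bit_at c (m - 1) = False \<longrightarrow>
            real (gb_idx m x c) =
              (1/2) * (\<Sum>i\<in>{i. i \<le> m - 2 \<and> bit_at c i = True}.
                         real (N_card (int i - int x + 1) x)))
       \<and> (bit_at c (m - 1) = True \<longrightarrow>
            real (gb_idx m x c) =
              (1/2) * (\<Sum>i\<in>{i. i \<le> m - 2 \<and> bit_at c i = False}.
                         real (N_card (int i - int x + 1) x)))"
proof -
  have len: "length c = m" using assms(3) by (simp add: LOCO_def)
  then have "bit_at c (m - 1) = hd c" using assms(2) by (cases c) (auto simp: bit_at_def)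
  moreover have "real (gb_idx m x c) = 1/2 * real (weight x (tl (if hd c then map Not c else c)))"
    using double_gb_idx[OF assms] by (simp add: field_simps flip: of_nat_mult)
  ultimately show ?thesis
    using sum_bit_at_eq_weight[OF len assms(2), where b = "\<not> hd c" and x = x]
    by (cases "hd c") simp_all
qed

end
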